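(* Assume there exists a subset $S\subseteq\{1,\dots,d\}$ that is e-invariant with respect to $\mathcal E$, and assume that every $S\subseteq\{1,\dots,d\}$ that is e-invariant with respect to $\mathcal E^{\mathrm{tr}}$ is also e-invariant with respect to $\mathcal E^{\mathrm{tr}}\cup[e^{\mathrm{tst}}]$. Let $e\in\mathcal E^{\mathrm{tr}}$ be arbitrary, for every $S\in\mathcal S^{\mathrm{e\text{-}inv}}_{\mathcal E^{\mathrm{tr}}}$ let $\pi^S\in\Pi^S_{\mathrm{opt}}$, let $$S^*\in\operatorname*{argmax}_{S\in\mathcal S^{\mathrm{e\text{-}inv}}_{\mathcal E^{\mathrm{tr}}}}\mathbb E^{e^{\mathrm{tst}}}\Big[\sum_{t\in\mathcal T}\tau^S_e(X^S,t)\,\pi^S(t\mid X)\Big],$$ and let $\pi^{\mathrm{e\text{-}inv}}:=\pi^{S^*}$. Then: (i) $\max_{t\in\mathcal T}\mathbb E^{e^{\mathrm{tst}},\pi_t}[Y]\le\mathbb E^{e^{\mathrm{tst}},\pi^{\mathrm{e\text{-}inv}}}[Y]$. (ii) If in addition there exist $e'\in[e^{\mathrm{tst}}]$ and $S'\in\mathcal S^{\mathrm{e\text{-}inv}}_{\mathcal E}$ such that $\max_{t\in\mathcal T}\tau_{e'}(x,t)=\max_{t\in\mathcal T}\tau^{S'}_{e'}(x^{S'},t)$ for all $x\in\mathcal X$, then $V^{[e^{\mathrm{tst}}]}(\pi^{\mathrm{e\text{-}inv}})\ge V^{[e^{\mathrm{tst}}]}(\pi)$ for all $\pi\in\Pi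$.
   Context: Multi-environment policy learning setting. Let $\mathcal E\subset\mathbb R$ be a set of environments, $\mathcal X\subseteq\mathbb R^d$, $\mathcal U\subseteq\mathbb R^p$, $\mathcal T=\{1,\dots,k\}$ a finite set of treatments, $\Delta(\mathcal T)$ the probability simplex over $\mathcal T$, and $\Pi=\{\pi:\mathcal X\to\Delta(\mathcal T)\}$ the set of policies; write $\pi(t\mid x):=\pi(x)(t)$. For each $e\in\mathcal E$ let $\mathbb P^e_{X,U}$ be a distribution on $\mathcal X\times\mathcal U$, and for each $e,x,u,t$ a distribution $\mathbb P^e_{Y\mid X=x,U=u,T=t}$ on $\mathbb R$. For $e\in\mathcal E$, $\pi\in\Pi$, $(Y,X,U,T)$ is defined by $(X,U)\sim\mathbb P^e_{X,U}$, $T\sim\pi(X)$, $Y\sim\mathbb P^e_{Y\mid X,U,T}$; expectations are denoted $\mathbb E^{e,\pi}$ ($\pi$ dropped for quantities of $(X,U)$ only). Joint laws have densities with respect to a common product measure, and $\mathbb P^e_X$ has full support on $\mathcal X$. Training observations $(Y_i,X_i,T_i,\pi_i,e_i)_{i=1}^n$: environments $e_i$ and policies $\pi_i$ fixed, $(X_i,U_i)\sim\mathbb P^{e_i}_{X,U}$, $T_i\sim\pi_i(X_i)$, $Y_i\sim\mathbb P^{e_i}_{Y\mid X=X_i,U=U_i,T=T_i}$, independently over $i$; the training policies satisfy $\pi_i(t\mid x)>0$ for all $i,t,x$. $\mathcal E^{\mathrm{tr}}\subseteq\mathcal E$ is the set of environments appearing in the training data. Zero-shot setting: at test time only covariate observations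 from a test environment $e^{\mathrm{tst}}\in\mathcal E$ are available, with distribution $Q^{\mathrm{tst}}_X:=\mathbb P^{e^{\mathrm{tst}}}_X$; $[e^{\mathrm{tst}}]:=\{e\in\mathcal E:\mathbb P^e_X=Q^{\mathrm{tst}}_X\}$. A baseline treatment $t_0\in\mathcal T$ is fixed; $\pi_t$ denotes the policy always selecting $t$. For $S\subseteq\{1,\dots,d\}$, $x^S$ is the subvector with coordinates in $S$, $\mathcal X^S$ the projection of $\mathcal X$. CATE: $\tau^S_e(x,t):=\mathbb E^{e,\pi_t}[Y\mid X^S=x]-\mathbb E^{e,\pi_{t_0}}[Y\mid X^S=x]$; $\tau_e:=\tau^{\{1,\dots,d\}}_e$. $S$ is e-invariant with respect to $\mathcal E^\diamond\subseteq\mathcal E$ if $\tau^S_{e_1}\equiv\tau^S_{e_2}$ for all $e_1,e_2\in\mathcal E^\diamond$; $\mathcal S^{\mathrm{e\text{-}inv}}_{\mathcal E^\diamond}$ is the collection of all such sets. For $S\in\mathcal S^{\mathrm{e\text{-}inv}}_{\mathcal E^{\mathrm{tr}}}$: $\Pi^S$ is the set of policies $\pi$ with $\pi(\cdot\mid x)=\bar\pi(\cdot\mid x^S)$ for some $\bar\pi:\mathcal X^S\to\Delta(\mathcal T)$; $\Pi^S_{\mathrm{opt}}$ is the set of $\pi^S\in\Pi^S$ such that $\pi^S(t\mid x)>0$ implies $t\in\operatorname*{argmax}_{t'\in\mathcal T}\frac{1}{|\mathcal E^{\mathrm{tr}}|}\sum_{e\in\mathcal E^{\mathrm{tr}}}\tau^S_e(x^S,t')$.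 Worst-case objective: $V^{[e^{\mathrm{tst}}]}(\pi):=\inf_{e\in[e^{\mathrm{tst}}]}\big(\mathbb E^{e,\pi}[Y]-\mathbb E^{e,\pi_{t_0}}[Y]\big)$. *)

theory Defs
  imports "HOL-Probability.Probability"
begin

text \<open>Environments are reals,
covariates x :: 'd => real (coordinates indexed by the finite type 'd, i.e. R^d),
hidden variables u :: 'p => real, treatments are the naturals 1..k.
Policies are functions pi x t = pi(t|x).\<close>

record ('d, 'p) model =
  nuX  :: "'d \<Rightarrow> real measure"
  nuU  :: "('p \<Rightarrow> real) measure"
  nuY  :: "real measure"
  dXU  :: "real \<Rightarrow> ('d \<Rightarrow> real) \<Rightarrow> ('p \<Rightarrow> real) \<Rightarrow> real"
  dY   :: "real \<Rightarrow> ('d \<Rightarrow> real) \<Rightarrow> ('p \<Rightarrow> real) \<Rightarrow> nat \<Rightarrow> real \<Rightarrow> real"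
  ntrt :: nat
  tbase :: nat
  Xsp  :: "('d \<Rightarrow> real) set"
  Usp  :: "('p \<Rightarrow> real) set"

definition Trt :: "('d, 'p) model \<Rightarrow> nat set" where
  "Trt M = {1..ntrt M}"

definition baseX :: "('d, 'p) model \<Rightarrow> ('d \<Rightarrow> real) measure" where
  "baseX M = PiM UNIV (nuX M)"

definition PXU :: "('d, 'p) model \<Rightarrow> real \<Rightarrow> (('d \<Rightarrow> real) \<times> ('p \<Rightarrow> real)) measure" where
  "PXU M e = density (baseX M \<Otimes>\<^sub>M nuU M) (\<lambda>xu. ennreal (dXU M e (fst xu) (snd xu)))"

definition PX :: "('d, 'p) model \<Rightarrow> real \<Rightarrow> ('d \<Rightarrow> real) measure" where
  "PX M e = distr (PXU M e) (baseX M) fst"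

definition PY :: "('d, 'p) model \<Rightarrow> real \<Rightarrow> ('d \<Rightarrow> real) \<Rightarrow> ('p \<Rightarrow> real) \<Rightarrow> nat \<Rightarrow> real measure" where
  "PY M e x u t = density (nuY M) (\<lambda>y. ennreal (dY M e x u t y))"

definition mY :: "('d, 'p) model \<Rightarrow> real \<Rightarrow> ('d \<Rightarrow> real) \<Rightarrow> ('p \<Rightarrow> real) \<Rightarrow> nat \<Rightarrow> real" where
  "mY M e x u t = (\<integral>y. y \<partial>PY M e x u t)"

definition EY :: "('d, 'p) model \<Rightarrow> real \<Rightarrow> (('d \<Rightarrow> real) \<Rightarrow> nat \<Rightarrow> real) \<Rightarrow> real" where
  "EY M e pol = (\<integral>xu. (\<Sum>t\<in>Trt M. pol (fst xu) t * mY M e (fst xu) (snd xu) t) \<partial>PXU M e)"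

definition const_pol :: "nat \<Rightarrow> ('d \<Rightarrow> real) \<Rightarrow> nat \<Rightarrow> real" where
  "const_pol t = (\<lambda>x s. if s = t then 1 else 0)"

definition mergeS :: "'d set \<Rightarrow> ('d \<Rightarrow> real) \<Rightarrow> ('d \<Rightarrow> real) \<Rightarrow> ('d \<Rightarrow> real)" where
  "mergeS S x z = (\<lambda>i. if i \<in> S then x i else z i)"

text \<open>E^{e,pi_t}[Y | X^S = x^S], via the ratio of (marginalised) densities;
  it depends on x only through its coordinates in S.\<close>
definition condY :: "('d, 'p) model \<Rightarrow> real \<Rightarrow> nat \<Rightarrow> 'd set \<Rightarrow> ('d \<Rightarrow> real) \<Rightarrow> real" where
  "condY M e t S x =
     (\<integral>z. (\<integral>u. mY M e (mergeS S x z) u t * dXU M e (mergeS S x z) u \<partial>nuU M) \<partial>PiM (UNIV - S) (nuX M))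
   / (\<integral>z. (\<integral>u. dXU M e (mergeS S x z) u \<partial>nuU M) \<partial>PiM (UNIV - S) (nuX M))"

definition tauS :: "('d, 'p) model \<Rightarrow> real \<Rightarrow> 'd set \<Rightarrow> ('d \<Rightarrow> real) \<Rightarrow> nat \<Rightarrow> real" where
  "tauS M e S x t = condY M e t S x - condY M e (tbase M) S x"

definition tau :: "('d, 'p) model \<Rightarrow> real \<Rightarrow> ('d \<Rightarrow> real) \<Rightarrow> nat \<Rightarrow> real" where
  "tau M e = tauS M e UNIV"

definition e_inv :: "('d, 'p) model \<Rightarrow> real set \<Rightarrow> 'd set \<Rightarrow> bool" where
  "e_inv M Ed S = (\<forall>e1\<in>Ed. \<forall>e2\<in>Ed. \<forall>x\<in>Xsp M. \<forall>t\<in>Trt M. tauS M e1 S x t = tauS M e2 S x t)"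

definition Einv :: "('d, 'p) model \<Rightarrow> real set \<Rightarrow> 'd set set" where
  "Einv M Ed = {S. e_inv M Ed S}"

definition is_policy :: "('d, 'p) model \<Rightarrow> (('d \<Rightarrow> real) \<Rightarrow> nat \<Rightarrow> real) \<Rightarrow> bool" where
  "is_policy M pol =
     ((\<forall>t. (\<lambda>x. pol x t) \<in> borel_measurable (baseX M)) \<and>
      (\<forall>x\<in>Xsp M. (\<forall>t\<in>Trt M. 0 \<le> pol x t) \<and> (\<Sum>t\<in>Trt M. pol x t) = 1))"

definition PiS :: "('d, 'p) model \<Rightarrow> 'd set \<Rightarrow> (('d \<Rightarrow> real) \<Rightarrow> nat \<Rightarrow> real) \<Rightarrow> bool" where
  "PiS M S pol = (is_policy M pol \<and>
     (\<exists>pb. \<forall>x\<in>Xsp M. \<forall>t\<in>Trt M. pol x t = pb (restrict x S) t))"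

definition PiS_opt :: "('d, 'p) model \<Rightarrow> real set \<Rightarrow> 'd set \<Rightarrow> (('d \<Rightarrow> real) \<Rightarrow> nat \<Rightarrow> real) \<Rightarrow> bool" where
  "PiS_opt M Etr S pol = (PiS M S pol \<and>
     (\<forall>x\<in>Xsp M. \<forall>t\<in>Trt M. pol x t > 0 \<longrightarrow>
        (\<forall>t'\<in>Trt M. (1 / real (card Etr)) * (\<Sum>e\<in>Etr. tauS M e S x t')
                    \<le> (1 / real (card Etr)) * (\<Sum>e\<in>Etr. tauS M e S x t))))"

definition eq_class :: "('d, 'p) model \<Rightarrow> real set \<Rightarrow> real \<Rightarrow> real set" where
  "eq_class M E etst = {e \<in> E. PX M e = PX M etst}"

text \<open>Worst-case objective (extended real, the infimum may be -infinity).\<close>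
definition Vworst :: "('d, 'p) model \<Rightarrow> real set \<Rightarrow> real \<Rightarrow> (('d \<Rightarrow> real) \<Rightarrow> nat \<Rightarrow> real) \<Rightarrow> ereal" where
  "Vworst M E etst pol =
     (INF e\<in>eq_class M E etst. ereal (EY M e pol - EY M e (const_pol (tbase M))))"

definition model_ok :: "('d, 'p) model \<Rightarrow> real set \<Rightarrow> bool" where
  "model_ok M E =
    (ntrt M \<ge> 1 \<and> tbase M \<in> Trt M \<and>
     (\<forall>i. sigma_finite_measure (nuX M i) \<and> sets (nuX M i) = sets borel) \<and>
     sigma_finite_measure (nuU M) \<and> sigma_finite_measure (nuY M) \<and>
     (\<forall>e\<in>E.
        (\<lambda>xu. dXU M e (fst xu) (snd xu)) \<in> borel_measurable (baseX M \<Otimes>\<^sub>M nuU M) \<and>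
        (\<forall>x u. 0 \<le> dXU M e x u) \<and>
        prob_space (PXU M e) \<and>
        (AE xu in PXU M e. fst xu \<in> Xsp M \<and> snd xu \<in> Usp M) \<and>
        (\<forall>A\<in>sets (PX M e). open A \<and> A \<inter> Xsp M \<noteq> {} \<longrightarrow> emeasure (PX M e) A > 0) \<and>
        (\<forall>t\<in>Trt M.
           (\<lambda>p. dY M e (fst (fst p)) (snd (fst p)) t (snd p))
               \<in> borel_measurable ((baseX M \<Otimes>\<^sub>M nuU M) \<Otimes>\<^sub>M nuY M) \<and>
           (\<forall>x u y. 0 \<le> dY M e x u t y) \<and>
           (\<forall>x u. prob_space (PY M e x u t)) \<and>
           (AE xu in PXU M e. integrable (PY M e (fst xu) (snd xu) t) (\<lambda>y. y)) \<and>
           integrable (PXU M e) (\<lambda>xu. \<integral>y. \<bar>y\<bar> \<partial>PY M e (fst xu) (snd xu) t))))"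

end

theory Submission
  imports Defs
begin

text \<open>
  For a policy that depends on x only through x^S, the gain over the baseline treatment is the
  P_X-integral of sum_t tau^S_e(x, t) pi(t|x).  This is the tower property for the conditional
  means E[Y | X^S, do t], which are explicit ratios of marginal densities: after integrating out U
  and splitting x into its coordinates inside and outside S, the policy is constant on every fibre,
  so the ratio may replace the outcome.
  Invariance of S over the training environments and [e_tst] lets tau^S_e be replaced by
  tau^S_etr, and pi^S only selects its maximisers.  Hence pi^{S*} beats every constant treatment in
  e_tst, which is (i).  Its gain is the same in every environment of [e_tst]; in the environment e'
  whose CATE maximum is already attained by an invariant S', any policy gains at most the
  objective of S', hence at most that of S*, which is (ii).
\<close>

section \<open>Integrals over a product with a factor constant on fibres\<close>

lemma integrable_mult_bounded_on_support:
  fixes f g :: "'a \<Rightarrow> real"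
  assumes f: "integrable M f" and g[measurable]: "g \<in> borel_measurable M"
    and g_bounded: "AE x in M. f x \<noteq> 0 \<longrightarrow> \<bar>g x\<bar> \<le> B"
  shows "integrable M (\<lambda>x. g x * f x)"
proof (rule Bochner_Integration.integrable_bound)
  show "integrable M (\<lambda>x. B * f x)" using f by simp
  show "AE x in M. norm (g x * f x) \<le> norm (B * f x)"
    using g_bounded by eventually_elim (auto simp: abs_mult intro: mult_right_mono)
qed (use f in measurable)

lemma (in pair_sigma_finite) AE_fibre_ratio_mult_cancel:
  fixes n d :: "'a \<times> 'b \<Rightarrow> real" and c :: "'a \<Rightarrow> real"
  assumes d: "integrable (M1 \<Otimes>\<^sub>M M2) d" and d_nonneg: "\<And>p. 0 \<le> d p"
    and n_null: "AE p in M1 \<Otimes>\<^sub>M M2. d p = 0 \<longrightarrow> n p = 0"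
    and c: "\<And>a. a \<in> space M1 \<Longrightarrow> c a = (\<integral>z. n (a, z) \<partial>M2) / (\<integral>z. d (a, z) \<partial>M2)"
  shows "AE a in M1. c a * (\<integral>z. d (a, z) \<partial>M2) = (\<integral>z. n (a, z) \<partial>M2)"
  using AE_integrable_fst'[OF d] AE_pair[OF n_null] AE_space
proof eventually_elim
  case (elim a)
  show ?case
  proof (cases "(\<integral>z. d (a, z) \<partial>M2) = 0")
    case True
    then have "AE z in M2. d (a, z) = 0"
      using elim(1) d_nonneg by (subst (asm) integral_nonneg_eq_0_iff_AE) auto
    with elim(2) have "AE z in M2. n (a, z) = 0" by eventually_elim simp
    then show ?thesis using True by (simp add: integral_eq_zero_AE)
  qed (simp add: c[OF elim(3)])
qed

lemma (in pair_sigma_finite) integrable_fibre_ratio_mult: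
  fixes n d :: "'a \<times> 'b \<Rightarrow> real" and c :: "'a \<Rightarrow> real"
  assumes n: "integrable (M1 \<Otimes>\<^sub>M M2) n" and d: "integrable (M1 \<Otimes>\<^sub>M M2) d"
    and d_nonneg: "\<And>p. 0 \<le> d p" and [measurable]: "c \<in> borel_measurable M1"
    and cancel: "AE a in M1. c a * (\<integral>z. d (a, z) \<partial>M2) = (\<integral>z. n (a, z) \<partial>M2)"
  shows "integrable (M1 \<Otimes>\<^sub>M M2) (\<lambda>p. c (fst p) * d p)"
proof (rule Fubini_integrable)
  have [measurable]: "d \<in> borel_measurable (M1 \<Otimes>\<^sub>M M2)" using d by blast
  then show "(\<lambda>p. c (fst p) * d p) \<in> borel_measurable (M1 \<Otimes>\<^sub>M M2)" by measurable
  show "AE a in M1. integrable M2 (\<lambda>z. c (fst (a, z)) * d (a, z))"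
    using AE_integrable_fst'[OF d] by eventually_elim simp
  have "integrable M1 (\<lambda>a. \<bar>\<integral>z. n (a, z) \<partial>M2\<bar>)"
    using integrable_fst'[OF n] by (rule integrable_abs)
  then show "integrable M1 (\<lambda>a. \<integral>z. norm (c (fst (a, z)) * d (a, z)) \<partial>M2)"
  proof (rule integrable_cong_AE_imp)
    show "(\<lambda>a. \<integral>z. norm (c (fst (a, z)) * d (a, z)) \<partial>M2) \<in> borel_measurable M1"
      by (rule M2.borel_measurable_lebesgue_integral) measurable
    show "AE a in M1. \<bar>\<integral>z. n (a, z) \<partial>M2\<bar> = (\<integral>z. norm (c (fst (a, z)) * d (a, z)) \<partial>M2)"
      using cancel
    proof eventually_elim
      case (elim a)
      have "(\<integral>z. norm (c a * d (a, z)) \<partial>M2) = \<bar>c a\<bar> * (\<integral>z. d (a, z) \<partial>M2)"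
        using d_nonneg by (simp add: abs_mult)
      also have "\<dots> = \<bar>\<integral>z. n (a, z) \<partial>M2\<bar>"
        using elim d_nonneg by (auto simp: abs_mult integral_nonneg simp flip: elim)
      finally show ?case by simp
    qed
  qed
qed

lemma (in pair_sigma_finite) AE_fibre_integral_eq_fibre_ratio:
  fixes n d G :: "'a \<times> 'b \<Rightarrow> real" and c :: "'a \<Rightarrow> real"
  assumes [measurable]: "n \<in> borel_measurable (M1 \<Otimes>\<^sub>M M2)" "d \<in> borel_measurable (M1 \<Otimes>\<^sub>M M2)"
      "G \<in> borel_measurable (M1 \<Otimes>\<^sub>M M2)"
    and n_null: "AE p in M1 \<Otimes>\<^sub>M M2. d p = 0 \<longrightarrow> n p = 0"
    and cancel: "AE a in M1. c a * (\<integral>z. d (a, z) \<partial>M2) = (\<integral>z. n (a, z) \<partial>M2)"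
    and G_fibre_const: "AE a in M1. \<exists>\<gamma>. AE z in M2. d (a, z) \<noteq> 0 \<longrightarrow> G (a, z) = \<gamma>"
  shows "AE a in M1. (\<integral>z. G (a, z) * n (a, z) \<partial>M2) = (\<integral>z. G (a, z) * (c a * d (a, z)) \<partial>M2)"
  using G_fibre_const AE_pair[OF n_null] cancel AE_space
proof eventually_elim
  case (elim a)
  then obtain \<gamma> where \<gamma>: "AE z in M2. d (a, z) \<noteq> 0 \<longrightarrow> G (a, z) = \<gamma>" by blast
  have [measurable]: "(\<lambda>z. n (a, z)) \<in> borel_measurable M2" "(\<lambda>z. d (a, z)) \<in> borel_measurable M2"
    "(\<lambda>z. G (a, z)) \<in> borel_measurable M2"
    using elim(4) by measurable
  have Gn: "AE z in M2. G (a, z) * n (a, z) = \<gamma> * n (a, z)"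
    using \<gamma> elim(2) by eventually_elim auto
  have Gd: "AE z in M2. \<gamma> * (c a * d (a, z)) = G (a, z) * (c a * d (a, z))"
    using \<gamma> by eventually_elim auto
  have "(\<integral>z. G (a, z) * n (a, z) \<partial>M2) = (\<integral>z. \<gamma> * n (a, z) \<partial>M2)"
    using Gn by (intro integral_cong_AE) simp_all
  also have "\<dots> = \<gamma> * (c a * (\<integral>z. d (a, z) \<partial>M2))" using elim(3) by simp
  also have "\<dots> = (\<integral>z. \<gamma> * (c a * d (a, z)) \<partial>M2)" by simp
  also have "\<dots> = (\<integral>z. G (a, z) * (c a * d (a, z)) \<partial>M2)"
    using Gd by (intro integral_cong_AE) simp_all
  finally show ?case .
qed

lemma (in pair_sigma_finite) AE_fibre_const_on_support:
  assumes support: "AE p in M1 \<Otimes>\<^sub>M M2. d p \<noteq> 0 \<longrightarrow> P p"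
    and G_const: "\<And>a z z'. P (a, z) \<Longrightarrow> P (a, z') \<Longrightarrow> G (a, z) = G (a, z')"
  shows "AE a in M1. \<exists>\<gamma>. AE z in M2. d (a, z) \<noteq> 0 \<longrightarrow> G (a, z) = \<gamma>"
  using AE_pair[OF support]
proof eventually_elim
  case (elim a)
  show ?case
  proof (cases "\<exists>z. P (a, z)")
    case True
    then obtain z0 where "P (a, z0)" by blast
    with elim show ?thesis by (intro exI[of _ "G (a, z0)"]) (auto elim: eventually_mono intro: G_const)
  next
    case False
    with elim show ?thesis by (auto elim: eventually_mono)
  qed
qed

text \<open>On each fibre G equals a constant \<gamma> on the support of d, so both sides reduce to
  \<gamma> times the fibre integral of n.\<close>
lemma (in pair_sigma_finite) integral_mult_eq_fibre_ratio:
  fixes n d G :: "'a \<times> 'b \<Rightarrow> real" and c :: "'a \<Rightarrow> real"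
  assumes n: "integrable (M1 \<Otimes>\<^sub>M M2) n" and d: "integrable (M1 \<Otimes>\<^sub>M M2) d"
    and d_nonneg: "\<And>p. 0 \<le> d p"
    and n_null: "AE p in M1 \<Otimes>\<^sub>M M2. d p = 0 \<longrightarrow> n p = 0"
    and c[measurable]: "c \<in> borel_measurable M1"
    and c_eq: "\<And>a. a \<in> space M1 \<Longrightarrow> c a = (\<integral>z. n (a, z) \<partial>M2) / (\<integral>z. d (a, z) \<partial>M2)"
    and G[measurable]: "G \<in> borel_measurable (M1 \<Otimes>\<^sub>M M2)"
    and G_bounded: "AE p in M1 \<Otimes>\<^sub>M M2. d p \<noteq> 0 \<longrightarrow> \<bar>G p\<bar> \<le> B"
    and G_fibre_const: "AE a in M1. \<exists>\<gamma>. AE z in M2. d (a, z) \<noteq> 0 \<longrightarrow> G (a, z) = \<gamma>"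
  shows "integrable (M1 \<Otimes>\<^sub>M M2) (\<lambda>p. G p * c (fst p) * d p)"
    and "(\<integral>p. G p * n p \<partial>(M1 \<Otimes>\<^sub>M M2)) = (\<integral>p. G p * c (fst p) * d p \<partial>(M1 \<Otimes>\<^sub>M M2))"
proof -
  have cancel: "AE a in M1. c a * (\<integral>z. d (a, z) \<partial>M2) = (\<integral>z. n (a, z) \<partial>M2)"
    using d d_nonneg n_null c_eq by (rule AE_fibre_ratio_mult_cancel)
  have [measurable]: "n \<in> borel_measurable (M1 \<Otimes>\<^sub>M M2)" "d \<in> borel_measurable (M1 \<Otimes>\<^sub>M M2)"
    using n d by blast+
  have Gn: "integrable (M1 \<Otimes>\<^sub>M M2) (\<lambda>p. G p * n p)"
  proof (rule integrable_mult_bounded_on_support[OF n G])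
    show "AE p in M1 \<Otimes>\<^sub>M M2. n p \<noteq> 0 \<longrightarrow> \<bar>G p\<bar> \<le> B"
      using G_bounded n_null by eventually_elim auto
  qed
  have Gcd: "integrable (M1 \<Otimes>\<^sub>M M2) (\<lambda>p. G p * (c (fst p) * d p))"
  proof (rule integrable_mult_bounded_on_support[OF integrable_fibre_ratio_mult[OF n d d_nonneg c cancel] G])
    show "AE p in M1 \<Otimes>\<^sub>M M2. c (fst p) * d p \<noteq> 0 \<longrightarrow> \<bar>G p\<bar> \<le> B"
      using G_bounded by eventually_elim auto
  qed
  then show "integrable (M1 \<Otimes>\<^sub>M M2) (\<lambda>p. G p * c (fst p) * d p)" by (simp add: mult.assoc)
  have "(\<integral>p. G p * n p \<partial>(M1 \<Otimes>\<^sub>M M2)) = (\<integral>a. \<integral>z. G (a, z) * n (a, z) \<partial>M2 \<partial>M1)"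
    using integral_fst'[OF Gn] by simp
  also have "\<dots> = (\<integral>a. \<integral>z. G (a, z) * (c a * d (a, z)) \<partial>M2 \<partial>M1)"
    using AE_fibre_integral_eq_fibre_ratio[OF _ _ G n_null cancel G_fibre_const]
    by (intro integral_cong_AE; (rule M2.borel_measurable_lebesgue_integral)?; measurable)
  also have "\<dots> = (\<integral>p. G p * (c (fst p) * d p) \<partial>(M1 \<Otimes>\<^sub>M M2))"
    using integral_fst'[OF Gcd] by simp
  finally show "(\<integral>p. G p * n p \<partial>(M1 \<Otimes>\<^sub>M M2)) = (\<integral>p. G p * c (fst p) * d p \<partial>(M1 \<Otimes>\<^sub>M M2))"
    by (simp add: mult.assoc)
qed

lemma (in pair_sigma_finite) distr_fst_density:
  assumes [measurable]: "f \<in> borel_measurable (M1 \<Otimes>\<^sub>M M2)"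
  shows "distr (density (M1 \<Otimes>\<^sub>M M2) f) M1 fst = density M1 (\<lambda>x. \<integral>\<^sup>+y. f (x, y) \<partial>M2)"
proof (rule measure_eqI)
  fix A assume "A \<in> sets (distr (density (M1 \<Otimes>\<^sub>M M2) f) M1 fst)"
  then have [measurable]: "A \<in> sets M1" by simp
  have "emeasure (distr (density (M1 \<Otimes>\<^sub>M M2) f) M1 fst) A
      = (\<integral>\<^sup>+p. f p * indicator (A \<times> space M2) p \<partial>(M1 \<Otimes>\<^sub>M M2))"
    by (simp add: emeasure_distr emeasure_density nn_integral_set_ennreal space_pair_measure
        vimage_fst Times_Int_Times)
  also have "\<dots> = (\<integral>\<^sup>+x. (\<integral>\<^sup>+y. f (x, y) \<partial>M2) * indicator A x \<partial>M1)"
    by (subst M2.nn_integral_fst[symmetric]) (auto intro!: nn_integral_cong simp: indicator_def)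
  also have "\<dots> = emeasure (density M1 (\<lambda>x. \<integral>\<^sup>+y. f (x, y) \<partial>M2)) A"
    by (simp add: emeasure_density mult.commute)
  finally show "emeasure (distr (density (M1 \<Otimes>\<^sub>M M2) f) M1 fst) A
      = emeasure (density M1 (\<lambda>x. \<integral>\<^sup>+y. f (x, y) \<partial>M2)) A" .
qed simp

section \<open>Marginal densities and conditional outcomes\<close>

definition dX :: "('d, 'p) model \<Rightarrow> real \<Rightarrow> ('d \<Rightarrow> real) \<Rightarrow> real" where
  "dX M e x = (\<integral>u. dXU M e x u \<partial>nuU M)"

definition mYdX :: "('d, 'p) model \<Rightarrow> real \<Rightarrow> nat \<Rightarrow> ('d \<Rightarrow> real) \<Rightarrow> real" where
  "mYdX M e t x = (\<integral>u. mY M e x u t * dXU M e x u \<partial>nuU M)"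

lemma condY_eq_ratio:
  "condY M e t S x = (\<integral>z. mYdX M e t (mergeS S x z) \<partial>PiM (UNIV - S) (nuX M))
     / (\<integral>z. dX M e (mergeS S x z) \<partial>PiM (UNIV - S) (nuX M))"
  by (simp add: condY_def dX_def mYdX_def)

lemma condY_cong: "(\<And>i. i \<in> S \<Longrightarrow> x i = x' i) \<Longrightarrow> condY M e t S x = condY M e t S x'"
  by (simp add: condY_def mergeS_def cong: if_cong)

definition depends_only_on :: "('d, 'p) model \<Rightarrow> 'd set \<Rightarrow> (('d \<Rightarrow> real) \<Rightarrow> 'a) \<Rightarrow> bool" where
  "depends_only_on M S g \<longleftrightarrow> (\<forall>x\<in>Xsp M. \<forall>x'\<in>Xsp M. restrict x S = restrict x' S \<longrightarrow> g x = g x')"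

lemma mergeS_eq_merge: "mergeS S x z = merge S (UNIV - S) (restrict x S, z)"
  by (auto simp: mergeS_def merge_def fun_eq_iff)

lemma finite_Trt: "finite (Trt M)"
  by (simp add: Trt_def)

lemma measurable_PX_iff: "f \<in> borel_measurable (PX M e) \<longleftrightarrow> f \<in> borel_measurable (baseX M)"
  by (simp add: PX_def)

lemma policy_bounds:
  assumes "is_policy M pol" "x \<in> Xsp M" "t \<in> Trt M"
  shows "0 \<le> pol x t" and "pol x t \<le> 1"
proof -
  have nonneg: "\<forall>s\<in>Trt M. 0 \<le> pol x s" and sum1: "(\<Sum>s\<in>Trt M. pol x s) = 1"
    using assms by (auto simp: is_policy_def)
  show "0 \<le> pol x t" using nonneg assms(3) by blast
  show "pol x t \<le> 1"
    using member_le_sum[OF assms(3) _ finite_Trt, of "pol x"] nonneg sum1 by auto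
qed

lemma is_policy_const_pol: "t \<in> Trt M \<Longrightarrow> is_policy M (const_pol t)"
  using finite_Trt[of M] by (simp add: is_policy_def const_pol_def sum.delta)

lemma PiS_depends_only_on: "PiS M S pol \<Longrightarrow> t \<in> Trt M \<Longrightarrow> depends_only_on M S (\<lambda>x. pol x t)"
  by (auto simp: PiS_def depends_only_on_def)

lemma PiS_const_pol:
  assumes "t \<in> Trt M" shows "PiS M S (const_pol t)"
  unfolding PiS_def
proof (intro conjI exI[of _ "\<lambda>_. const_pol t undefined"] ballI)
  show "is_policy M (const_pol t)" using assms by (rule is_policy_const_pol)
qed (simp add: const_pol_def)

lemma PiS_UNIV: "is_policy M pol \<Longrightarrow> PiS M UNIV pol"
  unfolding PiS_def by (auto intro: exI[of _ pol] simp: restrict_def)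

context
  fixes M :: "('d::finite, 'p) model" and E :: "real set"
  assumes model: "model_ok M E"
begin

lemma tbase_Trt: "tbase M \<in> Trt M"
  using model by (simp add: model_ok_def)

lemma sets_nuX: "sets (nuX M i) = sets borel"
  using model by (simp add: model_ok_def)

lemma product_sigma_finite_nuX: "product_sigma_finite (nuX M)"
  using model by (simp add: model_ok_def product_sigma_finite_def)

lemma sigma_finite_nuU: "sigma_finite_measure (nuU M)"
  using model by (simp add: model_ok_def)

lemma space_baseX: "space (baseX M) = UNIV"
  using sets_eq_imp_space_eq[OF sets_nuX] by (simp add: baseX_def space_PiM)

lemma measurable_coordinate_nuX: "f \<in> borel_measurable K \<Longrightarrow> f \<in> measurable K (nuX M i)"
  by (simp add: measurable_cong_sets[OF refl sets_nuX])

lemma measurable_coordinate_PiM: "(\<lambda>x. x i) \<in> borel_measurable (PiM I (nuX M))" if "i \<in> I"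
  using measurable_component_singleton[OF that, of "nuX M"] by (simp add: measurable_cong_sets[OF refl sets_nuX])

lemma measurable_merge_baseX [measurable]:
  "merge S (UNIV - S) \<in> measurable (PiM S (nuX M) \<Otimes>\<^sub>M PiM (UNIV - S) (nuX M)) (baseX M)"
  using measurable_merge[of S "UNIV - S" "nuX M"] by (simp add: baseX_def)

lemma distr_merge_baseX:
  "distr (PiM S (nuX M) \<Otimes>\<^sub>M PiM (UNIV - S) (nuX M)) (baseX M) (merge S (UNIV - S)) = baseX M"
  using product_sigma_finite.distr_merge[OF product_sigma_finite_nuX, of S "UNIV - S"] by (simp add: baseX_def)

lemma pair_sigma_finite_merge: "pair_sigma_finite (PiM S (nuX M)) (PiM (UNIV - S) (nuX M))"
  by (simp add: pair_sigma_finite_def product_sigma_finite.sigma_finite[OF product_sigma_finite_nuX])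

lemma integrable_merge_baseX_iff:
  fixes h :: "('d \<Rightarrow> real) \<Rightarrow> real"
  assumes "h \<in> borel_measurable (baseX M)"
  shows "integrable (PiM S (nuX M) \<Otimes>\<^sub>M PiM (UNIV - S) (nuX M)) (\<lambda>p. h (merge S (UNIV - S) p))
    \<longleftrightarrow> integrable (baseX M) h"
  using integrable_distr_eq[OF measurable_merge_baseX assms] by (simp add: distr_merge_baseX)

lemma integral_merge_baseX:
  fixes h :: "('d \<Rightarrow> real) \<Rightarrow> real"
  assumes "h \<in> borel_measurable (baseX M)"
  shows "(\<integral>p. h (merge S (UNIV - S) p) \<partial>(PiM S (nuX M) \<Otimes>\<^sub>M PiM (UNIV - S) (nuX M))) = integral\<^sup>L (baseX M) h"
  using integral_distr[OF measurable_merge_baseX assms] by (simp add: distr_merge_baseX)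

lemma AE_merge_baseX:
  assumes "AE x in baseX M. P x"
  shows "AE p in PiM S (nuX M) \<Otimes>\<^sub>M PiM (UNIV - S) (nuX M). P (merge S (UNIV - S) p)"
  using assms by (subst (asm) distr_merge_baseX[symmetric]) (rule AE_distrD[OF measurable_merge_baseX])

lemma measurable_mergeS:
  assumes "\<And>i. i \<in> S \<Longrightarrow> (\<lambda>x. x i) \<in> borel_measurable K"
  shows "(\<lambda>(x, z). mergeS S x z) \<in> measurable (K \<Otimes>\<^sub>M PiM (UNIV - S) (nuX M)) (baseX M)"
proof -
  have [measurable]: "(\<lambda>x. restrict x S) \<in> measurable K (PiM S (nuX M))"
    using assms by (auto intro!: measurable_restrict measurable_coordinate_nuX)
  have "(\<lambda>(x, z). merge S (UNIV - S) (restrict x S, z)) \<in> measurable (K \<Otimes>\<^sub>M PiM (UNIV - S) (nuX M)) (baseX M)"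
    by measurable
  then show ?thesis by (simp add: mergeS_eq_merge)
qed

context
  fixes e assumes e: "e \<in> E"
begin

lemma measurable_dXU [measurable]: "(\<lambda>xu. dXU M e (fst xu) (snd xu)) \<in> borel_measurable (baseX M \<Otimes>\<^sub>M nuU M)"
  and dXU_nonneg: "0 \<le> dXU M e x u"
  and prob_space_PXU: "prob_space (PXU M e)"
  and AE_PXU_Xsp: "AE xu in PXU M e. fst xu \<in> Xsp M"
  using model e by (auto simp: model_ok_def)

text \<open>Nothing is assumed about the \<sigma>-algebra of the base measure of Y; measurability of the
  identity is read off from the integrability of Y.\<close>
lemma measurable_ident_nuY: "t \<in> Trt M \<Longrightarrow> (\<lambda>y. y) \<in> borel_measurable (nuY M)"
proof -
  assume t: "t \<in> Trt M"
  have "AE xu in PXU M e. integrable (PY M e (fst xu) (snd xu) t) (\<lambda>y. y)"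
    using model e t by (auto simp: model_ok_def)
  then obtain xu where "integrable (PY M e (fst xu) (snd xu) t) (\<lambda>y. y)"
    using prob_space.AE_False[OF prob_space_PXU] by (metis (mono_tags) eventually_mono)
  then show ?thesis by (simp add: PY_def)
qed

lemma measurable_mY [measurable]:
  assumes t: "t \<in> Trt M"
  shows "(\<lambda>xu. mY M e (fst xu) (snd xu) t) \<in> borel_measurable (baseX M \<Otimes>\<^sub>M nuU M)"
proof -
  interpret Y: sigma_finite_measure "nuY M" using model by (simp add: model_ok_def)
  have dY[measurable]: "(\<lambda>p. dY M e (fst (fst p)) (snd (fst p)) t (snd p))
      \<in> borel_measurable ((baseX M \<Otimes>\<^sub>M nuU M) \<Otimes>\<^sub>M nuY M)"
    and dY_nonneg: "\<And>x u y. 0 \<le> dY M e x u t y"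
    using model e t by (auto simp: model_ok_def)
  have [measurable]: "(\<lambda>y. y) \<in> borel_measurable (nuY M)" by (rule measurable_ident_nuY[OF t])
  have mY_eq: "mY M e x u t = (\<integral>y. dY M e x u t y * y \<partial>nuY M)" if "u \<in> space (nuU M)" for x u
  proof -
    have "(\<lambda>y. dY M e x u t y) \<in> borel_measurable (nuY M)"
      using measurable_Pair2[OF dY, of "(x, u)"] that by (simp add: space_pair_measure space_baseX)
    then show ?thesis unfolding mY_def PY_def by (subst integral_density) (auto simp: dY_nonneg)
  qed
  have "(\<lambda>xu. \<integral>y. dY M e (fst xu) (snd xu) t y * y \<partial>nuY M) \<in> borel_measurable (baseX M \<Otimes>\<^sub>M nuU M)"
    by (rule Y.borel_measurable_lebesgue_integral) (simp add: split_beta')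
  then show ?thesis
    by (rule measurable_cong[THEN iffD1, rotated]) (auto simp: space_pair_measure mY_eq)
qed

lemma integrable_mY:
  assumes t: "t \<in> Trt M"
  shows "integrable (PXU M e) (\<lambda>xu. mY M e (fst xu) (snd xu) t)"
proof (rule Bochner_Integration.integrable_bound)
  show "integrable (PXU M e) (\<lambda>xu. \<integral>y. \<bar>y\<bar> \<partial>PY M e (fst xu) (snd xu) t)"
    using model e t by (auto simp: model_ok_def)
  show "AE xu in PXU M e. norm (mY M e (fst xu) (snd xu) t) \<le> norm (\<integral>y. \<bar>y\<bar> \<partial>PY M e (fst xu) (snd xu) t)"
    unfolding mY_def by (intro AE_I2 order.trans[OF integral_norm_bound]) simp
qed (use t in \<open>simp add: PXU_def\<close>)

lemma pair_sigma_finite_baseX_nuU: "pair_sigma_finite (baseX M) (nuU M)"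
  unfolding pair_sigma_finite_def baseX_def
  using product_sigma_finite.sigma_finite[OF product_sigma_finite_nuX] sigma_finite_nuU by simp

lemma integrable_dXU: "integrable (baseX M \<Otimes>\<^sub>M nuU M) (\<lambda>xu. dXU M e (fst xu) (snd xu))"
proof -
  have "integrable (PXU M e) (\<lambda>_. 1 :: real)"
    using prob_space_PXU by (simp add: prob_space_def finite_measure.integrable_const)
  then show ?thesis by (simp add: PXU_def integrable_density dXU_nonneg)
qed

lemma integrable_dXU_mY:
  "t \<in> Trt M \<Longrightarrow> integrable (baseX M \<Otimes>\<^sub>M nuU M)
    (\<lambda>xu. dXU M e (fst xu) (snd xu) * mY M e (fst xu) (snd xu) t)"
  using integrable_mY by (simp add: PXU_def integrable_density dXU_nonneg)

lemma measurable_dX [measurable]: "dX M e \<in> borel_measurable (baseX M)"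
  and integrable_dX: "integrable (baseX M) (dX M e)"
  using pair_sigma_finite.integrable_fst'[OF pair_sigma_finite_baseX_nuU integrable_dXU]
  by (auto simp: dX_def[abs_def])

lemma measurable_mYdX [measurable]: "t \<in> Trt M \<Longrightarrow> mYdX M e t \<in> borel_measurable (baseX M)"
  and integrable_mYdX: "t \<in> Trt M \<Longrightarrow> integrable (baseX M) (mYdX M e t)"
  using pair_sigma_finite.integrable_fst'[OF pair_sigma_finite_baseX_nuU integrable_dXU_mY]
  by (auto simp: mYdX_def[abs_def] mult.commute)

lemma dX_nonneg: "0 \<le> dX M e x"
  by (simp add: dX_def dXU_nonneg)

lemma PX_eq_density: "PX M e = density (baseX M) (dX M e)"
proof -
  interpret pair_sigma_finite "baseX M" "nuU M" by (rule pair_sigma_finite_baseX_nuU)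
  have "PX M e = density (baseX M) (\<lambda>x. \<integral>\<^sup>+u. dXU M e x u \<partial>nuU M)"
    by (simp add: PX_def PXU_def distr_fst_density)
  also have "\<dots> = density (baseX M) (dX M e)"
    using AE_integrable_fst'[OF integrable_dXU]
    by (intro density_cong) (auto simp: dX_def dXU_nonneg nn_integral_eq_integral elim: eventually_mono)
  finally show ?thesis .
qed

lemma AE_dX_Xsp: "AE x in baseX M. dX M e x \<noteq> 0 \<longrightarrow> x \<in> Xsp M"
proof -
  interpret pair_sigma_finite "baseX M" "nuU M" by (rule pair_sigma_finite_baseX_nuU)
  have "AE xu in baseX M \<Otimes>\<^sub>M nuU M. 0 < dXU M e (fst xu) (snd xu) \<longrightarrow> fst xu \<in> Xsp M"
    using AE_PXU_Xsp unfolding PXU_def by (subst (asm) AE_density) simp_all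
  from AE_pair[OF this] show ?thesis
  proof eventually_elim
    case (elim x)
    have "AE u in nuU M. x \<notin> Xsp M \<longrightarrow> dXU M e x u = 0"
      using elim by eventually_elim (auto intro: antisym dXU_nonneg)
    then show ?case by (auto simp: dX_def intro: integral_eq_zero_AE)
  qed
qed

lemma AE_dX_mYdX: "AE x in baseX M. dX M e x = 0 \<longrightarrow> mYdX M e t x = 0"
  using pair_sigma_finite.AE_integrable_fst'[OF pair_sigma_finite_baseX_nuU integrable_dXU]
proof eventually_elim
  case (elim x)
  show ?case
  proof
    assume "dX M e x = 0"
    then have "AE u in nuU M. dXU M e x u = 0"
      using elim by (simp add: dX_def integral_nonneg_eq_0_iff_AE dXU_nonneg)
    then show "mYdX M e t x = 0"
      unfolding mYdX_def by (intro integral_eq_zero_AE) (auto elim: eventually_mono)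
  qed
qed

lemma integral_PXU_mY:
  assumes t: "t \<in> Trt M" and [measurable]: "g \<in> borel_measurable (baseX M)"
    and g_bounded: "\<And>x. x \<in> Xsp M \<Longrightarrow> \<bar>g x\<bar> \<le> B"
  shows "integrable (PXU M e) (\<lambda>xu. g (fst xu) * mY M e (fst xu) (snd xu) t)"
    and "(\<integral>xu. g (fst xu) * mY M e (fst xu) (snd xu) t \<partial>PXU M e) = (\<integral>x. g x * mYdX M e t x \<partial>baseX M)"
proof -
  interpret pair_sigma_finite "baseX M" "nuU M" by (rule pair_sigma_finite_baseX_nuU)
  show "integrable (PXU M e) (\<lambda>xu. g (fst xu) * mY M e (fst xu) (snd xu) t)"
    using integrable_mY[OF t] by (rule integrable_mult_bounded_on_support)
      (use t AE_PXU_Xsp g_bounded in \<open>auto simp: PXU_def elim: eventually_mono\<close>)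
  then have "integrable (baseX M \<Otimes>\<^sub>M nuU M)
      (\<lambda>xu. dXU M e (fst xu) (snd xu) * (g (fst xu) * mY M e (fst xu) (snd xu) t))"
    using t by (simp add: PXU_def integrable_density dXU_nonneg)
  from integral_fst'[OF this] t show "(\<integral>xu. g (fst xu) * mY M e (fst xu) (snd xu) t \<partial>PXU M e)
      = (\<integral>x. g x * mYdX M e t x \<partial>baseX M)"
    by (simp add: PXU_def integral_density dXU_nonneg mYdX_def ac_simps)
qed

lemma measurable_condY:
  assumes t: "t \<in> Trt M" and K: "\<And>i. i \<in> S \<Longrightarrow> (\<lambda>x. x i) \<in> borel_measurable K"
  shows "condY M e t S \<in> borel_measurable K"
proof -
  interpret C: sigma_finite_measure "PiM (UNIV - S) (nuX M)"
    by (rule product_sigma_finite.sigma_finite[OF product_sigma_finite_nuX]) simp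
  have [measurable]: "(\<lambda>x. \<integral>z. f (mergeS S x z) \<partial>PiM (UNIV - S) (nuX M)) \<in> borel_measurable K"
    if [measurable]: "f \<in> borel_measurable (baseX M)" for f :: "('d \<Rightarrow> real) \<Rightarrow> real"
    using measurable_comp[OF measurable_mergeS[OF K] that]
    by (intro C.borel_measurable_lebesgue_integral[of "\<lambda>x z. f (mergeS S x z)"])
      (simp add: comp_def case_prod_beta')
  show ?thesis
    unfolding condY_eq_ratio[abs_def] using t by measurable
qed

lemma measurable_condY_baseX [measurable]: "t \<in> Trt M \<Longrightarrow> condY M e t S \<in> borel_measurable (baseX M)"
  using measurable_condY[OF _ measurable_coordinate_PiM] by (simp add: baseX_def)

lemma AE_PX_Xsp: "AE x in PX M e. x \<in> Xsp M"
proof -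
  have "(\<lambda>x. ennreal (dX M e x)) \<in> borel_measurable (baseX M)" by measurable
  then have "AE x in density (baseX M) (\<lambda>x. ennreal (dX M e x)). x \<in> Xsp M"
    using AE_dX_Xsp by (subst AE_density) (auto elim: eventually_mono)
  then show ?thesis by (simp only: PX_eq_density)
qed

section \<open>The tower property and policy values\<close>

lemma AE_merge_fibre_const:
  assumes g_S: "depends_only_on M S g"
  shows "AE a in PiM S (nuX M). \<exists>\<gamma>. AE z in PiM (UNIV - S) (nuX M).
    dX M e (merge S (UNIV - S) (a, z)) \<noteq> 0 \<longrightarrow> g (merge S (UNIV - S) (a, z)) = \<gamma>"
proof (rule pair_sigma_finite.AE_fibre_const_on_support[OF pair_sigma_finite_merge AE_merge_baseX[OF AE_dX_Xsp]])
  fix a z z' assume "merge S (UNIV - S) (a, z) \<in> Xsp M" "merge S (UNIV - S) (a, z') \<in> Xsp M"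
  moreover have "restrict (merge S (UNIV - S) (a, z)) S = restrict (merge S (UNIV - S) (a, z')) S"
    by (simp add: merge_def fun_eq_iff)
  ultimately show "g (merge S (UNIV - S) (a, z)) = g (merge S (UNIV - S) (a, z'))"
    using g_S unfolding depends_only_on_def by blast
qed

lemma integral_mYdX_eq_condY_dX:
  fixes g :: "('d \<Rightarrow> real) \<Rightarrow> real"
  assumes t: "t \<in> Trt M" and [measurable]: "g \<in> borel_measurable (baseX M)"
    and g_bounded: "\<And>x. x \<in> Xsp M \<Longrightarrow> \<bar>g x\<bar> \<le> B" and g_S: "depends_only_on M S g"
  shows "integrable (baseX M) (\<lambda>x. g x * condY M e t S x * dX M e x)"
    and "(\<integral>x. g x * mYdX M e t x \<partial>baseX M) = (\<integral>x. g x * condY M e t S x * dX M e x \<partial>baseX M)"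
proof -
  let ?A = "PiM S (nuX M)" and ?C = "PiM (UNIV - S) (nuX M)" and ?mg = "merge S (UNIV - S)"
  note [measurable] = measurable_condY_baseX[OF t] measurable_mYdX[OF t] measurable_dX
  have condY_mg: "condY M e t S (?mg p) = condY M e t S (fst p)" for p
    by (rule condY_cong) (simp add: merge_def split_beta)
  have n: "integrable (?A \<Otimes>\<^sub>M ?C) (\<lambda>p. mYdX M e t (?mg p))"
    and d: "integrable (?A \<Otimes>\<^sub>M ?C) (\<lambda>p. dX M e (?mg p))"
    using t by (simp_all add: integrable_merge_baseX_iff integrable_mYdX integrable_dX)
  have c: "condY M e t S \<in> borel_measurable ?A"
    by (rule measurable_condY[OF t]) (rule measurable_coordinate_PiM)
  have c_eq: "condY M e t S a = (\<integral>z. mYdX M e t (?mg (a, z)) \<partial>?C) / (\<integral>z. dX M e (?mg (a, z)) \<partial>?C)"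
    if "a \<in> space ?A" for a
    using that by (simp add: condY_eq_ratio mergeS_eq_merge space_PiM)
  have G_bounded: "AE p in ?A \<Otimes>\<^sub>M ?C. dX M e (?mg p) \<noteq> 0 \<longrightarrow> \<bar>g (?mg p)\<bar> \<le> B"
    using AE_merge_baseX[OF AE_dX_Xsp] by eventually_elim (simp add: g_bounded)
  note fibre_ratio = pair_sigma_finite.integral_mult_eq_fibre_ratio[OF pair_sigma_finite_merge n d dX_nonneg
      AE_merge_baseX[OF AE_dX_mYdX] c c_eq _ G_bounded AE_merge_fibre_const[OF g_S], simplified condY_mg[symmetric]]
  show "integrable (baseX M) (\<lambda>x. g x * condY M e t S x * dX M e x)"
    and "(\<integral>x. g x * mYdX M e t x \<partial>baseX M) = (\<integral>x. g x * condY M e t S x * dX M e x \<partial>baseX M)"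
    using fibre_ratio integrable_merge_baseX_iff[where h = "\<lambda>x. g x * condY M e t S x * dX M e x"]
      integral_merge_baseX[where h = "\<lambda>x. g x * condY M e t S x * dX M e x"]
      integral_merge_baseX[where h = "\<lambda>x. g x * mYdX M e t x"]
    by simp_all
qed

lemma integral_mY_eq_integral_condY:
  fixes g :: "('d \<Rightarrow> real) \<Rightarrow> real"
  assumes t: "t \<in> Trt M" and g[measurable]: "g \<in> borel_measurable (baseX M)"
    and g_bounded: "\<And>x. x \<in> Xsp M \<Longrightarrow> \<bar>g x\<bar> \<le> B"
    and g_S: "depends_only_on M S g"
  shows "integrable (PX M e) (\<lambda>x. g x * condY M e t S x)"
    and "(\<integral>xu. g (fst xu) * mY M e (fst xu) (snd xu) t \<partial>PXU M e) = (\<integral>x. g x * condY M e t S x \<partial>PX M e)"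
proof -
  note [measurable] = measurable_condY_baseX[OF t] measurable_dX
  note disintegration = integral_mYdX_eq_condY_dX[OF t g g_bounded g_S]
  have m: "(\<lambda>x. g x * condY M e t S x) \<in> borel_measurable (baseX M)" by measurable
  have reorder: "(\<lambda>x. dX M e x *\<^sub>R (g x * condY M e t S x)) = (\<lambda>x. g x * condY M e t S x * dX M e x)"
    by (simp add: fun_eq_iff mult_ac)
  note density = integrable_density[OF m measurable_dX AE_I2[OF dX_nonneg]]
    integral_density[OF m measurable_dX AE_I2[OF dX_nonneg]]
  show "integrable (PX M e) (\<lambda>x. g x * condY M e t S x)"
    using disintegration(1) density(1) by (simp only: PX_eq_density reorder)
  show "(\<integral>xu. g (fst xu) * mY M e (fst xu) (snd xu) t \<partial>PXU M e) = (\<integral>x. g x * condY M e t S x \<partial>PX M e)"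
    using integral_PXU_mY(2)[OF t g g_bounded] disintegration(2) density(2)
    by (simp only: PX_eq_density reorder)
qed

lemma
  assumes pol: "PiS M S pol"
  shows integrable_policy_condY:
      "\<And>s t. s \<in> Trt M \<Longrightarrow> t \<in> Trt M \<Longrightarrow> integrable (PX M e) (\<lambda>x. pol x t * condY M e s S x)"
    and EY_eq_sum_integral_condY: "EY M e pol = (\<Sum>t\<in>Trt M. \<integral>x. pol x t * condY M e t S x \<partial>PX M e)"
proof -
  have pol_measurable: "(\<lambda>x. pol x t) \<in> borel_measurable (baseX M)" for t
    using pol by (simp add: PiS_def is_policy_def)
  have bounded: "\<bar>pol x t\<bar> \<le> 1" if "t \<in> Trt M" "x \<in> Xsp M" for x t
    using policy_bounds[OF _ that(2,1)] pol by (simp add: PiS_def)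
  have tower: "integrable (PX M e) (\<lambda>x. pol x t * condY M e s S x)"
    "(\<integral>xu. pol (fst xu) t * mY M e (fst xu) (snd xu) s \<partial>PXU M e) = (\<integral>x. pol x t * condY M e s S x \<partial>PX M e)"
    if "s \<in> Trt M" "t \<in> Trt M" for s t
    using integral_mY_eq_integral_condY[OF that(1) pol_measurable bounded[OF that(2)]
        PiS_depends_only_on[OF pol that(2)]] by simp_all
  show "integrable (PX M e) (\<lambda>x. pol x t * condY M e s S x)" if "s \<in> Trt M" "t \<in> Trt M" for s t
    using tower(1)[OF that] .
  have "EY M e pol = (\<Sum>t\<in>Trt M. \<integral>xu. pol (fst xu) t * mY M e (fst xu) (snd xu) t \<partial>PXU M e)"
    unfolding EY_def
  proof (rule Bochner_Integration.integral_sum)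
    show "integrable (PXU M e) (\<lambda>xu. pol (fst xu) t * mY M e (fst xu) (snd xu) t)" if "t \<in> Trt M" for t
      by (rule integral_PXU_mY(1)[OF that pol_measurable bounded[OF that]])
  qed
  also have "\<dots> = (\<Sum>t\<in>Trt M. \<integral>x. pol x t * condY M e t S x \<partial>PX M e)"
    using tower(2) by (intro sum.cong) simp_all
  finally show "EY M e pol = (\<Sum>t\<in>Trt M. \<integral>x. pol x t * condY M e t S x \<partial>PX M e)" .
qed

lemma EY_base_eq_sum_integral_condY:
  assumes pol: "PiS M S pol"
  shows "EY M e (const_pol (tbase M)) = (\<Sum>t\<in>Trt M. \<integral>x. pol x t * condY M e (tbase M) S x \<partial>PX M e)"
proof -
  define t0 where "t0 = tbase M"
  have t0: "t0 \<in> Trt M" unfolding t0_def by (rule tbase_Trt)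
  have [measurable]: "(\<lambda>x. pol x t) \<in> borel_measurable (baseX M)" for t
    using pol by (simp add: PiS_def is_policy_def)
  note [measurable] = measurable_condY_baseX[OF t0]
  have "(\<integral>x. const_pol t0 x t * condY M e t S x \<partial>PX M e)
      = (if t = t0 then \<integral>x. condY M e t0 S x \<partial>PX M e else 0)" for t
    by (simp add: const_pol_def)
  then have "EY M e (const_pol t0) = (\<integral>x. condY M e t0 S x \<partial>PX M e)"
    using EY_eq_sum_integral_condY[OF PiS_const_pol[OF t0], of S] t0 finite_Trt[of M] by simp
  also have "\<dots> = (\<integral>x. (\<Sum>t\<in>Trt M. pol x t * condY M e t0 S x) \<partial>PX M e)"
  proof (rule integral_cong_AE)
    show "AE x in PX M e. condY M e t0 S x = (\<Sum>t\<in>Trt M. pol x t * condY M e t0 S x)"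
      using AE_PX_Xsp
      by eventually_elim (use pol in \<open>simp add: PiS_def is_policy_def flip: sum_distrib_right\<close>)
  qed (simp_all only: measurable_PX_iff, measurable)
  also have "\<dots> = (\<Sum>t\<in>Trt M. \<integral>x. pol x t * condY M e t0 S x \<partial>PX M e)"
    using integrable_policy_condY[OF pol t0] by (intro Bochner_Integration.integral_sum)
  finally show ?thesis by (simp add: t0_def)
qed

lemma
  assumes pol: "PiS M S pol"
  shows integrable_sum_tauS_policy: "integrable (PX M e) (\<lambda>x. \<Sum>t\<in>Trt M. tauS M e S x t * pol x t)"
    and EY_diff_eq_integral_tauS:
      "EY M e pol - EY M e (const_pol (tbase M)) = (\<integral>x. (\<Sum>t\<in>Trt M. tauS M e S x t * pol x t) \<partial>PX M e)"
proof -
  define t0 where "t0 = tbase M"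
  have t0: "t0 \<in> Trt M" unfolding t0_def by (rule tbase_Trt)
  note int = integrable_policy_condY[OF pol]
  have tau_pol: "(\<lambda>x. tauS M e S x t * pol x t) = (\<lambda>x. pol x t * condY M e t S x - pol x t * condY M e t0 S x)" for t
    by (simp add: fun_eq_iff tauS_def t0_def algebra_simps)
  have int_tau: "integrable (PX M e) (\<lambda>x. tauS M e S x t * pol x t)" if "t \<in> Trt M" for t
    unfolding tau_pol using int[OF that that] int[OF t0 that] by (rule Bochner_Integration.integrable_diff)
  then show "integrable (PX M e) (\<lambda>x. \<Sum>t\<in>Trt M. tauS M e S x t * pol x t)"
    by (rule Bochner_Integration.integrable_sum)
  have "EY M e pol - EY M e (const_pol t0)
      = (\<Sum>t\<in>Trt M. (\<integral>x. pol x t * condY M e t S x \<partial>PX M e)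
          - (\<integral>x. pol x t * condY M e t0 S x \<partial>PX M e))"
    unfolding EY_eq_sum_integral_condY[OF pol] EY_base_eq_sum_integral_condY[OF pol, folded t0_def]
    by (rule sum_subtractf[symmetric])
  also have "\<dots> = (\<Sum>t\<in>Trt M. \<integral>x. tauS M e S x t * pol x t \<partial>PX M e)"
    unfolding tau_pol using int t0 by (intro sum.cong refl Bochner_Integration.integral_diff[symmetric])
  also have "\<dots> = (\<integral>x. (\<Sum>t\<in>Trt M. tauS M e S x t * pol x t) \<partial>PX M e)"
    using int_tau by (rule Bochner_Integration.integral_sum[symmetric])
  finally show "EY M e pol - EY M e (const_pol (tbase M))
      = (\<integral>x. (\<Sum>t\<in>Trt M. tauS M e S x t * pol x t) \<partial>PX M e)"
    by (simp add: t0_def)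
qed

lemma integral_PX_cong_Xsp:
  assumes [measurable]: "f \<in> borel_measurable (baseX M)" "g \<in> borel_measurable (baseX M)"
    and eq: "\<And>x. x \<in> Xsp M \<Longrightarrow> f x = g x"
  shows "integral\<^sup>L (PX M e) f = integral\<^sup>L (PX M e) g"
    and "integrable (PX M e) f \<longleftrightarrow> integrable (PX M e) (g :: _ \<Rightarrow> real)"
proof -
  have ae: "AE x in PX M e. f x = g x"
    using AE_PX_Xsp by eventually_elim (rule eq)
  show "integral\<^sup>L (PX M e) f = integral\<^sup>L (PX M e) g"
    using ae by (intro integral_cong_AE) (simp_all add: measurable_PX_iff)
  show "integrable (PX M e) f \<longleftrightarrow> integrable (PX M e) g"
    using ae by (intro integrable_cong_AE) (simp_all add: measurable_PX_iff)
qed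

lemma integral_PX_mono_Xsp:
  assumes "integrable (PX M e) f" "integrable (PX M e) g" and le: "\<And>x. x \<in> Xsp M \<Longrightarrow> f x \<le> (g x :: real)"
  shows "integral\<^sup>L (PX M e) f \<le> integral\<^sup>L (PX M e) g"
  using assms(1,2) by (rule integral_mono_AE) (use AE_PX_Xsp le in \<open>auto elim: eventually_mono\<close>)

lemma measurable_sum_tauS_policy:
  assumes pol: "PiS M S pol"
  shows "(\<lambda>x. \<Sum>t\<in>Trt M. tauS M e S x t * pol x t) \<in> borel_measurable (baseX M)"
proof -
  have [measurable]: "(\<lambda>x. pol x t) \<in> borel_measurable (baseX M)" for t
    using pol by (simp add: PiS_def is_policy_def)
  note [measurable] = measurable_condY_baseX tbase_Trt
  show ?thesis unfolding tauS_def by measurable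
qed

end

end

section \<open>Invariant policies\<close>

lemma convex_comb_le_Max:
  fixes f p :: "'a \<Rightarrow> real"
  assumes "finite T" "T \<noteq> {}" "\<And>t. t \<in> T \<Longrightarrow> 0 \<le> p t" "(\<Sum>t\<in>T. p t) = 1"
  shows "(\<Sum>t\<in>T. f t * p t) \<le> Max (f ` T)"
proof -
  have "(\<Sum>t\<in>T. f t * p t) \<le> (\<Sum>t\<in>T. Max (f ` T) * p t)"
    using assms by (intro sum_mono mult_right_mono) auto
  also have "\<dots> = Max (f ` T)" using assms(4) by (simp flip: sum_distrib_left)
  finally show ?thesis .
qed

lemma convex_comb_eq_Max:
  fixes f p :: "'a \<Rightarrow> real"
  assumes "finite T" "\<And>t. t \<in> T \<Longrightarrow> 0 \<le> p t" "(\<Sum>t\<in>T. p t) = 1"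
    and argmax: "\<And>t t'. t \<in> T \<Longrightarrow> t' \<in> T \<Longrightarrow> 0 < p t \<Longrightarrow> f t' \<le> f t"
  shows "(\<Sum>t\<in>T. f t * p t) = Max (f ` T)"
proof -
  have "f t * p t = Max (f ` T) * p t" if "t \<in> T" for t
  proof (cases "p t = 0")
    case False
    with assms(2)[OF that] have "0 < p t" by simp
    then have "Max (f ` T) \<le> f t" using that assms(1) argmax by (subst Max_le_iff) auto
    moreover have "f t \<le> Max (f ` T)" using that assms(1) by simp
    ultimately show ?thesis by simp
  qed simp
  then have "(\<Sum>t\<in>T. f t * p t) = (\<Sum>t\<in>T. Max (f ` T) * p t)" by (rule sum.cong[OF refl])
  also have "\<dots> = Max (f ` T)" using assms(3) by (simp flip: sum_distrib_left)
  finally show ?thesis .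
qed

lemma e_invD: "e_inv M Ed S \<Longrightarrow> e1 \<in> Ed \<Longrightarrow> e2 \<in> Ed \<Longrightarrow> x \<in> Xsp M \<Longrightarrow> t \<in> Trt M
    \<Longrightarrow> tauS M e1 S x t = tauS M e2 S x t"
  unfolding e_inv_def by blast

lemma e_inv_subset: "e_inv M Ed S \<Longrightarrow> Ed' \<subseteq> Ed \<Longrightarrow> e_inv M Ed' S"
  unfolding e_inv_def by blast

locale invariant_policy_setting =
  fixes M :: "('d::finite, 'p) model" and E Etr :: "real set" and etst etr :: real
    and piS :: "'d set \<Rightarrow> ('d \<Rightarrow> real) \<Rightarrow> nat \<Rightarrow> real"
  assumes model: "model_ok M E"
    and Etr_subset: "Etr \<subseteq> E" and finite_Etr: "finite Etr" and etr: "etr \<in> Etr"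
    and etst: "etst \<in> E"
    and inv_tst: "\<forall>S. e_inv M Etr S \<longrightarrow> e_inv M (Etr \<union> eq_class M E etst) S"
    and piS_opt: "\<forall>S\<in>Einv M Etr. PiS_opt M Etr S (piS S)"
begin

definition plugin_value :: "'d set \<Rightarrow> real" where
  "plugin_value S = (\<integral>x. (\<Sum>t\<in>Trt M. tauS M etr S x t * piS S x t) \<partial>PX M etst)"

lemma etr_E: "etr \<in> E"
  using etr Etr_subset by blast

lemma eq_class_E: "e \<in> eq_class M E etst \<Longrightarrow> e \<in> E"
  and PX_eq_class: "e \<in> eq_class M E etst \<Longrightarrow> PX M e = PX M etst"
  and etst_eq_class: "etst \<in> eq_class M E etst"
  using etst by (simp_all add: eq_class_def)

lemma tauS_eq_tauS_etr:
  assumes S: "S \<in> Einv M Etr" and e: "e \<in> Etr \<union> eq_class M E etst" and "x \<in> Xsp M" "t \<in> Trt M"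
  shows "tauS M e S x t = tauS M etr S x t"
proof -
  have "e_inv M (Etr \<union> eq_class M E etst) S" using inv_tst S by (simp add: Einv_def)
  from e_invD[OF this e _ assms(3,4), of etr] etr show ?thesis by blast
qed

lemma PiS_piS: "S \<in> Einv M Etr \<Longrightarrow> PiS M S (piS S)"
  using piS_opt by (simp add: PiS_opt_def)

lemma piS_attains_Max:
  assumes S: "S \<in> Einv M Etr" and x: "x \<in> Xsp M"
  shows "(\<Sum>t\<in>Trt M. tauS M etr S x t * piS S x t) = Max ((\<lambda>t. tauS M etr S x t) ` Trt M)"
proof (rule convex_comb_eq_Max[OF finite_Trt])
  have "card Etr \<noteq> 0" using finite_Etr etr by auto
  then have average: "1 / real (card Etr) * (\<Sum>e\<in>Etr. tauS M e S x t) = tauS M etr S x t" if "t \<in> Trt M" for t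
    using tauS_eq_tauS_etr[OF S _ x that] by simp
  show "tauS M etr S x t' \<le> tauS M etr S x t" if "t \<in> Trt M" "t' \<in> Trt M" "0 < piS S x t" for t t'
  proof -
    have "1 / real (card Etr) * (\<Sum>e\<in>Etr. tauS M e S x t') \<le> 1 / real (card Etr) * (\<Sum>e\<in>Etr. tauS M e S x t)"
      using piS_opt S x that unfolding PiS_opt_def by blast
    then show "tauS M etr S x t' \<le> tauS M etr S x t" by (simp only: average that)
  qed
  show "0 \<le> piS S x t" if "t \<in> Trt M" for t
    using PiS_piS[OF S] x that by (auto simp: PiS_def is_policy_def)
  show "(\<Sum>t\<in>Trt M. piS S x t) = 1"
    using PiS_piS[OF S] x by (auto simp: PiS_def is_policy_def)
qed

lemma
  assumes S: "S \<in> Einv M Etr" and e: "e \<in> eq_class M E etst"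
  shows integrable_plugin_value:
      "integrable (PX M etst) (\<lambda>x. \<Sum>t\<in>Trt M. tauS M etr S x t * piS S x t)"
    and gain_piS: "EY M e (piS S) - EY M e (const_pol (tbase M)) = plugin_value S"
proof -
  note eE = eq_class_E[OF e]
  have same_integrand: "(\<Sum>t\<in>Trt M. tauS M e S x t * piS S x t) = (\<Sum>t\<in>Trt M. tauS M etr S x t * piS S x t)"
    if "x \<in> Xsp M" for x
    using tauS_eq_tauS_etr[OF S _ that] e by simp
  note cong = integral_PX_cong_Xsp[OF model eE measurable_sum_tauS_policy[OF model eE PiS_piS[OF S]]
      measurable_sum_tauS_policy[OF model etr_E PiS_piS[OF S]] same_integrand]
  show "integrable (PX M etst) (\<lambda>x. \<Sum>t\<in>Trt M. tauS M etr S x t * piS S x t)"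
    using integrable_sum_tauS_policy[OF model eE PiS_piS[OF S]] cong(2) by (simp add: PX_eq_class[OF e])
  show "EY M e (piS S) - EY M e (const_pol (tbase M)) = plugin_value S"
    using EY_diff_eq_integral_tauS[OF model eE PiS_piS[OF S]] cong(1)
    by (simp add: plugin_value_def PX_eq_class[OF e])
qed

lemma Vworst_piS: "S \<in> Einv M Etr \<Longrightarrow> Vworst M E etst (piS S) = ereal (plugin_value S)"
  using etst_eq_class by (auto simp: Vworst_def gain_piS INF_constant)

lemma EY_const_pol_le_EY_piS:
  assumes S: "S \<in> Einv M Etr" and t: "t \<in> Trt M"
  shows "EY M etst (const_pol t) \<le> EY M etst (piS S)"
proof -
  have "EY M etst (const_pol t) - EY M etst (const_pol (tbase M))
      = (\<integral>x. (\<Sum>s\<in>Trt M. tauS M etst S x s * const_pol t x s) \<partial>PX M etst)"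
    by (rule EY_diff_eq_integral_tauS[OF model etst PiS_const_pol[OF t]])
  also have "\<dots> \<le> plugin_value S"
    unfolding plugin_value_def
  proof (rule integral_PX_mono_Xsp[OF model etst integrable_sum_tauS_policy[OF model etst PiS_const_pol[OF t]]
        integrable_plugin_value[OF S etst_eq_class]])
    fix x assume x: "x \<in> Xsp M"
    have "(\<Sum>s\<in>Trt M. tauS M etst S x s * const_pol t x s) = tauS M etr S x t"
      using t finite_Trt[of M] tauS_eq_tauS_etr[OF S _ x t] etst_eq_class
      by (simp add: const_pol_def if_distrib sum.delta cong: if_cong)
    also have "\<dots> \<le> (\<Sum>s\<in>Trt M. tauS M etr S x s * piS S x s)"
      using t finite_Trt[of M] by (simp add: piS_attains_Max[OF S x])
    finally show "(\<Sum>s\<in>Trt M. tauS M etst S x s * const_pol t x s) \<le> (\<Sum>s\<in>Trt M. tauS M etr S x s * piS S x s)" .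
  qed
  also have "\<dots> = EY M etst (piS S) - EY M etst (const_pol (tbase M))"
    by (rule gain_piS[OF S etst_eq_class, symmetric])
  finally show ?thesis by simp
qed

lemma Einv_subset_Einv_Etr: "Einv M E \<subseteq> Einv M Etr"
  using Etr_subset by (auto simp: Einv_def intro: e_inv_subset)

lemma gain_le_plugin_value:
  assumes e': "e' \<in> eq_class M E etst" and S': "S' \<in> Einv M E"
    and Max_eq: "\<forall>x\<in>Xsp M. Max ((\<lambda>t. tau M e' x t) ` Trt M) = Max ((\<lambda>t. tauS M e' S' x t) ` Trt M)"
    and pol: "is_policy M pol"
  shows "EY M e' pol - EY M e' (const_pol (tbase M)) \<le> plugin_value S'"
proof -
  note e'E = eq_class_E[OF e'] and pol_UNIV = PiS_UNIV[OF pol]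
  have S'_tr: "S' \<in> Einv M Etr" using S' Einv_subset_Einv_Etr by blast
  have "EY M e' pol - EY M e' (const_pol (tbase M))
      = (\<integral>x. (\<Sum>t\<in>Trt M. tauS M e' UNIV x t * pol x t) \<partial>PX M etst)"
    using EY_diff_eq_integral_tauS[OF model e'E pol_UNIV] by (simp add: PX_eq_class[OF e'])
  also have "\<dots> \<le> plugin_value S'"
    unfolding plugin_value_def
  proof (rule integral_PX_mono_Xsp[OF model etst _ integrable_plugin_value[OF S'_tr etst_eq_class]])
    show "integrable (PX M etst) (\<lambda>x. \<Sum>t\<in>Trt M. tauS M e' UNIV x t * pol x t)"
      using integrable_sum_tauS_policy[OF model e'E pol_UNIV] by (simp add: PX_eq_class[OF e'])
    fix x assume x: "x \<in> Xsp M"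
    have "(\<Sum>t\<in>Trt M. tauS M e' UNIV x t * pol x t) \<le> Max ((\<lambda>t. tau M e' x t) ` Trt M)"
      unfolding tau_def using pol x tbase_Trt[OF model]
      by (intro convex_comb_le_Max[OF finite_Trt]) (auto simp: is_policy_def)
    also have "\<dots> = Max ((\<lambda>t. tauS M etr S' x t) ` Trt M)"
      using Max_eq x e_invD[of M E S' e' etr x] S' e'E etr_E by (simp add: Einv_def)
    also have "\<dots> = (\<Sum>t\<in>Trt M. tauS M etr S' x t * piS S' x t)"
      by (rule piS_attains_Max[OF S'_tr x, symmetric])
    finally show "(\<Sum>t\<in>Trt M. tauS M e' UNIV x t * pol x t) \<le> (\<Sum>t\<in>Trt M. tauS M etr S' x t * piS S' x t)" .
  qed
  finally show ?thesis .
qed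


lemma Vworst_le_plugin_value:
  assumes e': "e' \<in> eq_class M E etst" and "S' \<in> Einv M E"
    and "\<forall>x\<in>Xsp M. Max ((\<lambda>t. tau M e' x t) ` Trt M) = Max ((\<lambda>t. tauS M e' S' x t) ` Trt M)"
    and "is_policy M pol"
  shows "Vworst M E etst pol \<le> ereal (plugin_value S')"
proof -
  have "Vworst M E etst pol \<le> ereal (EY M e' pol - EY M e' (const_pol (tbase M)))"
    unfolding Vworst_def by (rule INF_lower[OF e'])
  also have "\<dots> \<le> ereal (plugin_value S')" using gain_le_plugin_value[OF assms] by simp
  finally show ?thesis .
qed

end

theorem theorem1:
  fixes M :: "('d::finite, 'p) model"
    and E :: "real set"
    and n :: nat and envs :: "nat \<Rightarrow> real"
    and pols :: "nat \<Rightarrow> ('d \<Rightarrow> real) \<Rightarrow> nat \<Rightarrow> real"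
    and Etr :: "real set" and etst etr :: real
    and piS :: "'d set \<Rightarrow> ('d \<Rightarrow> real) \<Rightarrow> nat \<Rightarrow> real"
    and Sstar :: "'d set"
  assumes model: "model_ok M E"
    and train_n: "n \<ge> 1"
    and train_envs: "\<forall>i<n. envs i \<in> E"
    and train_pols: "\<forall>i<n. is_policy M (pols i) \<and> (\<forall>x\<in>Xsp M. \<forall>t\<in>Trt M. pols i x t > 0)"
    and Etr_def: "Etr = envs ` {..<n}"
    and etst: "etst \<in> E"
    and ex_inv: "\<exists>S. e_inv M E S"
    and inv_tst: "\<forall>S. e_inv M Etr S \<longrightarrow> e_inv M (Etr \<union> eq_class M E etst) S"
    and etr: "etr \<in> Etr"
    and piS_opt: "\<forall>S\<in>Einv M Etr. PiS_opt M Etr S (piS S)"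
    and Sstar_in: "Sstar \<in> Einv M Etr"
    and Sstar_max: "\<forall>S\<in>Einv M Etr.
          (\<integral>x. (\<Sum>t\<in>Trt M. tauS M etr S x t * piS S x t) \<partial>PX M etst)
          \<le> (\<integral>x. (\<Sum>t\<in>Trt M. tauS M etr Sstar x t * piS Sstar x t) \<partial>PX M etst)"
  shows "Max ((\<lambda>t. EY M etst (const_pol t)) ` Trt M) \<le> EY M etst (piS Sstar)
     \<and> ((\<exists>e'\<in>eq_class M E etst. \<exists>S'\<in>Einv M E. \<forall>x\<in>Xsp M.
            Max ((\<lambda>t. tau M e' x t) ` Trt M) = Max ((\<lambda>t. tauS M e' S' x t) ` Trt M))
        \<longrightarrow> (\<forall>pol. is_policy M pol \<longrightarrow> Vworst M E etst pol \<le> Vworst M E etst (piS Sstar)))"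
proof -
  interpret invariant_policy_setting M E Etr etst etr piS
    using model train_envs Etr_def etst inv_tst etr piS_opt by unfold_locales auto
  \<comment> \<open>Part (i) holds for every e-invariant set of the training environments, in particular
    for Sstar.\<close>
  have "Max ((\<lambda>t. EY M etst (const_pol t)) ` Trt M) \<le> EY M etst (piS Sstar)"
    using EY_const_pol_le_EY_piS[OF Sstar_in] finite_Trt tbase_Trt[OF model] by (subst Max_le_iff) auto
  moreover have "Vworst M E etst pol \<le> Vworst M E etst (piS Sstar)"
    if "e' \<in> eq_class M E etst" "S' \<in> Einv M E"
      "\<forall>x\<in>Xsp M. Max ((\<lambda>t. tau M e' x t) ` Trt M) = Max ((\<lambda>t. tauS M e' S' x t) ` Trt M)"
      "is_policy M pol" for e' S' pol
  proof -
    have "Vworst M E etst pol \<le> ereal (plugin_value S')" by (rule Vworst_le_plugin_value[OF that])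
    also have "\<dots> \<le> ereal (plugin_value Sstar)"
      using Sstar_max Einv_subset_Einv_Etr that(2) by (auto simp: plugin_value_def)
    also have "\<dots> = Vworst M E etst (piS Sstar)" by (rule Vworst_piS[OF Sstar_in, symmetric])
    finally show ?thesis .
  qed
  ultimately show ?thesis by blast
qed

end
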